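(* Let $\delta < \lambda$ be regular cardinals with $\lambda > \delta^+$, $\delta$ inaccessible, and $\lambda$ either inaccessible or the successor of a cardinal of cofinality $> \delta$. Then $\mathcal{K}(\delta,\lambda)$ satisfies the $\delta^{++}$-chain condition whenever $2^\delta = \delta^+$.
   Context: For regular $\kappa_0\le\kappa_1$, $\mathcal{K}(\kappa_0,\kappa_1)$ is the set of triples $\langle w,\alpha,\bar r\rangle$ with $w\subseteq\kappa_1$, $|w|=\kappa_0$, $\alpha<\kappa_0$, and $\bar r=\langle r_i:i\in w\rangle$ a sequence of functions from $\alpha$ to $\{0,1\}$, ordered by $\langle w^1,\alpha^1,\bar r^1\rangle\le\langle w^2,\alpha^2,\bar r^2\rangle$ iff $w^1\subseteq w^2$, $\alpha^1\le\alpha^2$, $r^1_i\subseteq r^2_i$ for $i\in w^1$, and $|\{i\in w^1: r^2_i\restriction(\alpha^2-\alpha^1)\text{ is not constantly }0\}|<\kappa_0$. *)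

theory Defs
  imports Main
begin

unbundle cardinal_syntax

(* Cardinals are represented as cardinal well-orders (Card_order r), compared by
   ordLess (<o) / ordIso (=o); ordinals below a cardinal kappa are the elements of
   Field kappa, ordered by kappa itself. *)

definition strong_limit :: "'a rel \<Rightarrow> bool" where
  "strong_limit k \<longleftrightarrow> (\<forall>X. X \<subseteq> Field k \<and> |X| <o k \<longrightarrow> |Pow X| <o k)"

definition inaccessible :: "'a rel \<Rightarrow> bool" where
  "inaccessible k \<longleftrightarrow> Card_order k \<and> natLeq <o k \<and> regularCard k \<and> strong_limit k"

definition cof_gt :: "'c rel \<Rightarrow> 'a rel \<Rightarrow> bool" where
  "cof_gt mu d \<longleftrightarrow> (\<forall>K. K \<subseteq> Field mu \<and> cofinal K mu \<longrightarrow> d <o card_of K)"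

(* Conditions <w, alpha, r> of K(k0,k1); r i beta = True means r_i(beta) = 1.
   r is required to vanish outside its domain (i in w, beta < alpha). *)
definition Kset :: "'a rel \<Rightarrow> 'b rel \<Rightarrow> ('b set \<times> 'a \<times> ('b \<Rightarrow> 'a \<Rightarrow> bool)) set" where
  "Kset k0 k1 = {(w, \<alpha>, r). w \<subseteq> Field k1 \<and> |w| =o k0 \<and> \<alpha> \<in> Field k0 \<and>
      (\<forall>i \<beta>. r i \<beta> \<longrightarrow> i \<in> w \<and> (\<beta>, \<alpha>) \<in> k0 \<and> \<beta> \<noteq> \<alpha>)}"

definition Kle :: "'a rel \<Rightarrow> ('b set \<times> 'a \<times> ('b \<Rightarrow> 'a \<Rightarrow> bool))
                   \<Rightarrow> ('b set \<times> 'a \<times> ('b \<Rightarrow> 'a \<Rightarrow> bool)) \<Rightarrow> bool" where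
  "Kle k0 p q = (case p of (w1, a1, r1) \<Rightarrow> case q of (w2, a2, r2) \<Rightarrow>
      w1 \<subseteq> w2 \<and> (a1, a2) \<in> k0 \<and>
      (\<forall>i \<in> w1. \<forall>\<beta>. (\<beta>, a1) \<in> k0 \<and> \<beta> \<noteq> a1 \<longrightarrow> r2 i \<beta> = r1 i \<beta>) \<and>
      |{i \<in> w1. \<exists>\<beta>. (a1, \<beta>) \<in> k0 \<and> (\<beta>, a2) \<in> k0 \<and> \<beta> \<noteq> a2 \<and> r2 i \<beta>}| <o k0)"

definition chain_condition :: "'p set \<Rightarrow> ('p \<Rightarrow> 'p \<Rightarrow> bool) \<Rightarrow> 'c rel \<Rightarrow> bool" where
  "chain_condition P le theta \<longleftrightarrow>
     (\<forall>A. A \<subseteq> P \<and> (\<forall>p\<in>A. \<forall>q\<in>A. p \<noteq> q \<longrightarrow> \<not> (\<exists>s\<in>P. le p s \<and> le q s))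
        \<longrightarrow> |A| <o theta)"

end

theory Submission
  imports Defs
begin

(* Let A be an antichain. Build sets of coordinates N_x, x < \<delta>\<^sup>+, each of size at most 2^\<delta>:
   N_x contains, for every q \<in> A and t \<subseteq> supp q lying in an earlier stage, the support of one
   fixed p \<in> A with p\<restriction>t = q\<restriction>t. Let M be the union of the stages. For q \<in> A the set
   t = supp q \<inter> M has size \<delta> < cf \<delta>\<^sup>+, so it lies in one stage, and the chosen p has
   supp p \<subseteq> M. Then p and q have the same height and agree on supp p \<inter> supp q \<subseteq> t, so their
   union extends both; hence p = q and supp q \<subseteq> M. As (2^\<delta>)^\<delta> = 2^\<delta>, there are at most
   2^\<delta> conditions supported in M, so |A| \<le> 2^\<delta> < \<delta>\<^sup>+\<^sup>+. *)

lemma card_of_bounded_subsets_le_Pow: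
  fixes X :: "'x set" and D :: "'d set"
  assumes X: "|X| \<le>o |Pow D|" and D: "\<not> finite D"
  shows "|{Y. Y \<subseteq> X \<and> |Y| \<le>o |D|}| \<le>o |Pow D|"
proof -
  have sub: "{Y. Y \<subseteq> X \<and> |Y| \<le>o |D|} \<subseteq> {{}} \<union> (\<lambda>g. g ` D) ` Func D X"
  proof
    fix Y assume Y: "Y \<in> {Y. Y \<subseteq> X \<and> |Y| \<le>o |D|}"
    show "Y \<in> {{}} \<union> (\<lambda>g. g ` D) ` Func D X"
    proof (cases "Y = {}")
      case False
      then obtain g where "g ` D = Y" using Y card_of_ordLeq2[of Y D] by auto
      then have "(\<lambda>d. if d \<in> D then g d else undefined) \<in> Func D X"
        and "(\<lambda>d. if d \<in> D then g d else undefined) ` D = Y"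
        using Y by (auto simp: Func_def)
      then show ?thesis by blast
    qed simp
  qed
  have images: "|(\<lambda>g. g ` D) ` Func D X| \<le>o |Pow D|"
  proof -
    have "|Func D X| =o |X| ^c |D|"
      unfolding cexp_def Field_card_of by (rule ordIso_refl[OF card_of_Card_order])
    also have "|X| ^c |D| \<le>o |Pow D| ^c |D|" by (rule cexp_mono1[OF X card_of_Card_order])
    also have "|Pow D| ^c |D| =o (ctwo ^c ( |D| )) ^c |D|"
      by (rule cexp_cong1[OF _ card_of_Card_order])
        (simp add: ctwo_def cexp_def Field_card_of card_of_Pow_Func)
    also have "(ctwo ^c ( |D| )) ^c |D| =o ctwo ^c |D|"
    proof (rule cexp_cprod_ordLeq[OF Card_order_ctwo])
      show "Cinfinite |D|" using D by (simp add: cinfinite_def Field_card_of card_of_card_order_on)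
      then show "Cnotzero |D|" by (rule Cinfinite_Cnotzero)
    qed (rule ordLeq_refl[OF card_of_Card_order])
    also have "ctwo ^c |D| =o |Pow D|"
      by (simp add: ctwo_def cexp_def Field_card_of card_of_Pow_Func ordIso_symmetric)
    finally show ?thesis by (rule ordLeq_transitive[OF card_of_image])
  qed
  have empty: "|{{}::'x set}| \<le>o |Pow D|" by (rule card_of_singl_ordLeq) blast
  have "\<not> finite (Field |Pow D| )" using D by (simp add: Field_card_of)
  from card_of_Un_ordLeq_infinite_Field[OF this empty images card_of_Card_order]
  show ?thesis by (rule ordLeq_transitive[OF card_of_mono1[OF sub]])
qed

locale trace_reflection =
  fixes A :: "'p set" and S :: "'p \<Rightarrow> 'i set" and \<tau> :: "'p \<Rightarrow> 'i set \<Rightarrow> 't"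
    and \<kappa> :: "'k rel" and \<theta> :: "'c rel"
  assumes Cinfinite_\<kappa>: "Cinfinite \<kappa>"
    and Card_order_\<theta>: "Card_order \<theta>"
    and cardSuc_le_\<theta>: "cardSuc \<kappa> \<le>o \<theta>"
    and card_support_le: "q \<in> A \<Longrightarrow> |S q| \<le>o \<kappa>"
    and card_traces_le:
      "|N| \<le>o \<theta> \<Longrightarrow> |{(t, \<tau> q t) |q t. q \<in> A \<and> t \<subseteq> S q \<and> t \<subseteq> N}| \<le>o \<theta>"
begin

definition witness :: "'i set \<times> 't \<Rightarrow> 'p" where
  "witness tT = (SOME p. p \<in> A \<and> \<tau> p (fst tT) = snd tT)"

lemma witness_realizes:
  assumes "q \<in> A"
  shows "witness (t, \<tau> q t) \<in> A \<and> \<tau> (witness (t, \<tau> q t)) t = \<tau> q t"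
  unfolding witness_def fst_conv snd_conv by (rule someI[of _ q]) (simp add: assms)

inductive in_stage :: "'k set \<Rightarrow> 'i \<Rightarrow> bool" where
  "(y, x) \<in> cardSuc \<kappa> \<Longrightarrow> y \<noteq> x \<Longrightarrow> q \<in> A \<Longrightarrow> t \<subseteq> S q \<Longrightarrow> \<forall>i\<in>t. in_stage y i
    \<Longrightarrow> j \<in> S (witness (t, \<tau> q t)) \<Longrightarrow> in_stage x j"

abbreviation stage :: "'k set \<Rightarrow> 'i set" where
  "stage x \<equiv> Collect (in_stage x)"

lemma Card_order_\<kappa>: "Card_order \<kappa>"
  using Cinfinite_\<kappa> by simp

lemma wo_rel_cardSuc: "wo_rel (cardSuc \<kappa>)"
  using Cinfinite_\<kappa> by (simp add: Card_order_wo_rel cardSuc_Card_order)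

lemma in_stage_mono:
  assumes "in_stage x j" and "(x, x') \<in> cardSuc \<kappa>"
  shows "in_stage x' j"
  using assms(1)
proof cases
  case (1 y q t)
  have "(y, x') \<in> cardSuc \<kappa>"
    using 1(1) assms(2) wo_rel.TRANS[OF wo_rel_cardSuc] by (auto dest: transD)
  moreover have "y \<noteq> x'"
    using 1(1,2) assms(2) wo_rel.ANTISYM[OF wo_rel_cardSuc] by (auto dest: antisymD)
  ultimately show ?thesis using 1 in_stage.intros by blast
qed

lemma infinite_Field_\<theta>: "\<not> finite (Field \<theta>)"
proof -
  have "cinfinite \<theta>"
    using cinfinite_mono[OF cardSuc_le_\<theta>] Cinfinite_cardSuc[OF Cinfinite_\<kappa>] by blast
  then show ?thesis by (simp add: cinfinite_def)
qed

lemma card_Field_cardSuc_le: "|Field (cardSuc \<kappa>)| \<le>o \<theta>"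
  by (rule ordIso_ordLeq_trans[OF card_of_Field_ordIso[OF cardSuc_Card_order] cardSuc_le_\<theta>])
    (rule Card_order_\<kappa>)

lemma card_support_le_\<theta>: "q \<in> A \<Longrightarrow> |S q| \<le>o \<theta>"
  by (rule ordLeq_transitive[OF card_support_le ordLeq_transitive[OF _ cardSuc_le_\<theta>]])
    (simp_all add: ordLess_imp_ordLeq cardSuc_greater Card_order_\<kappa>)

definition traces :: "'i set \<Rightarrow> ('i set \<times> 't) set" where
  "traces N = {(t, \<tau> q t) |q t. q \<in> A \<and> t \<subseteq> S q \<and> t \<subseteq> N}"

lemma card_witness_support_le:
  assumes "tT \<in> traces N"
  shows "|S (witness tT)| \<le>o \<theta>"
proof -
  obtain q t where "q \<in> A" "tT = (t, \<tau> q t)" using assms unfolding traces_def by blast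
  then show ?thesis using witness_realizes card_support_le_\<theta> by metis
qed

lemma stage_subset_witness_supports:
  "stage x \<subseteq> (\<Union>y\<in>underS (cardSuc \<kappa>) x. \<Union>tT\<in>traces (stage y). S (witness tT))"
proof
  fix j assume "j \<in> stage x"
  then have "in_stage x j" by simp
  then show "j \<in> (\<Union>y\<in>underS (cardSuc \<kappa>) x. \<Union>tT\<in>traces (stage y). S (witness tT))"
  proof cases
    case (1 y q t)
    then have "y \<in> underS (cardSuc \<kappa>) x" and "(t, \<tau> q t) \<in> traces (stage y)"
      unfolding underS_def traces_def by auto
    then show ?thesis using 1(6) by (intro UN_I)
  qed
qed

lemma card_stage_le: "|stage x| \<le>o \<theta>"
proof (induction x rule: wo_rel.well_order_induct[OF wo_rel_cardSuc])
  case (1 x)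
  have "underS (cardSuc \<kappa>) x \<subseteq> Field (cardSuc \<kappa>)" by (auto intro: underS_Field)
  then have "|underS (cardSuc \<kappa>) x| \<le>o \<theta>"
    by (rule ordLeq_transitive[OF card_of_mono1 card_Field_cardSuc_le])
  moreover have "|\<Union>tT\<in>traces (stage y). S (witness tT)| \<le>o \<theta>"
    if "y \<in> underS (cardSuc \<kappa>) x" for y
  proof (rule card_of_UNION_ordLeq_infinite_Field[OF infinite_Field_\<theta> Card_order_\<theta>])
    have "|stage y| \<le>o \<theta>" using 1 that unfolding underS_def by simp
    then show "|traces (stage y)| \<le>o \<theta>" unfolding traces_def by (rule card_traces_le)
  qed (auto intro: card_witness_support_le)
  ultimately have "|\<Union>y\<in>underS (cardSuc \<kappa>) x. \<Union>tT\<in>traces (stage y). S (witness tT)| \<le>o \<theta>"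
    by (blast intro: card_of_UNION_ordLeq_infinite_Field[OF infinite_Field_\<theta> Card_order_\<theta>])
  then show ?case by (rule ordLeq_transitive[OF card_of_mono1[OF stage_subset_witness_supports]])
qed

lemma reflecting_set_exists:
  "\<exists>M. |M| \<le>o \<theta> \<and> (\<forall>q\<in>A. \<exists>p\<in>A. S p \<subseteq> M \<and> \<tau> p (S q \<inter> M) = \<tau> q (S q \<inter> M))"
proof (intro exI conjI ballI)
  let ?M = "\<Union>x\<in>Field (cardSuc \<kappa>). stage x"
  show "|?M| \<le>o \<theta>"
    using card_Field_cardSuc_le card_stage_le
    by (simp add: card_of_UNION_ordLeq_infinite_Field[OF infinite_Field_\<theta> Card_order_\<theta>])
  fix q assume q: "q \<in> A"
  let ?t = "S q \<inter> ?M"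
  have "relChain (cardSuc \<kappa>) stage"
    unfolding relChain_def using in_stage_mono by blast
  moreover have "|?t| \<le>o \<kappa>"
    by (rule ordLeq_transitive[OF card_of_mono1[OF Int_lower1] card_support_le[OF q]])
  ultimately obtain y where y: "y \<in> Field (cardSuc \<kappa>)" "?t \<subseteq> stage y"
    using cardSuc_UNION_Cinfinite[OF Cinfinite_\<kappa>] by blast
  then obtain x where x: "x \<in> Field (cardSuc \<kappa>)" "y \<noteq> x" "(y, x) \<in> cardSuc \<kappa>"
    using infinite_Card_order_limit[OF cardSuc_Card_order[OF Card_order_\<kappa>]]
      Cinfinite_cardSuc[OF Cinfinite_\<kappa>] by (metis cinfinite_def)
  let ?p = "witness (?t, \<tau> q ?t)"
  have "S ?p \<subseteq> stage x"
    using in_stage.intros[OF x(3,2) q Int_lower1] y(2) by blast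
  then show "\<exists>p\<in>A. S p \<subseteq> ?M \<and> \<tau> p ?t = \<tau> q ?t"
    using witness_realizes[OF q, of ?t] x(1) by blast
qed

end

(* The restriction p\<restriction>t, remembering the height so that equal restrictions force equal heights. *)
definition Krestrict :: "'b set \<times> 'a \<times> ('b \<Rightarrow> 'a \<Rightarrow> bool) \<Rightarrow> 'b set \<Rightarrow> 'a \<times> ('b \<times> 'a) set" where
  "Krestrict p t = (case p of (w, \<alpha>, r) \<Rightarrow> (\<alpha>, {(i, \<beta>). i \<in> t \<and> r i \<beta>}))"

lemma Kset_compatible:
  assumes k0: "Cinfinite k0"
    and p: "p \<in> Kset k0 k1" and q: "q \<in> Kset k0 k1"
    and agree: "Krestrict p t = Krestrict q t" and common: "fst p \<inter> fst q \<subseteq> t"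
  shows "\<exists>s\<in>Kset k0 k1. Kle k0 p s \<and> Kle k0 q s"
proof -
  obtain w \<alpha> r w' \<alpha>' r' where pq: "p = (w, \<alpha>, r)" "q = (w', \<alpha>', r')"
    by (cases p, cases q) auto
  have Kp: "w \<subseteq> Field k1" "|w| =o k0" "\<alpha> \<in> Field k0"
      "\<And>i \<beta>. r i \<beta> \<Longrightarrow> i \<in> w \<and> (\<beta>, \<alpha>) \<in> k0 \<and> \<beta> \<noteq> \<alpha>"
    using p unfolding pq Kset_def by auto
  have Kq: "w' \<subseteq> Field k1" "|w'| =o k0"
      "\<And>i \<beta>. r' i \<beta> \<Longrightarrow> i \<in> w' \<and> (\<beta>, \<alpha>') \<in> k0 \<and> \<beta> \<noteq> \<alpha>'"
    using q unfolding pq Kset_def by auto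
  have same_height: "\<alpha>' = \<alpha>"
    and agree_common: "\<And>i \<beta>. i \<in> w \<Longrightarrow> i \<in> w' \<Longrightarrow> r i \<beta> = r' i \<beta>"
    using agree common unfolding pq Krestrict_def by (auto simp: set_eq_iff)
  have wo: "wo_rel k0" using k0 by (simp add: Card_order_wo_rel)
  define s where "s = (w \<union> w', \<alpha>, \<lambda>i \<beta>. r i \<beta> \<or> r' i \<beta>)"
  have "|w \<union> w'| =o k0"
  proof -
    have "|w \<union> w'| \<le>o k0"
      using k0 Kp(2) Kq(2)
      by (intro card_of_Un_ordLeq_infinite_Field) (auto simp: cinfinite_def ordIso_imp_ordLeq)
    moreover have "k0 \<le>o |w \<union> w'|"
      using ordIso_ordLeq_trans[OF ordIso_symmetric[OF Kp(2)] card_of_mono1[OF Un_upper1]] .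
    ultimately show ?thesis by (simp add: ordIso_iff_ordLeq)
  qed
  then have s: "s \<in> Kset k0 k1"
    using Kp Kq same_height unfolding s_def Kset_def by auto
  have no_new: "{i \<in> X. \<exists>\<beta>. (\<alpha>, \<beta>) \<in> k0 \<and> (\<beta>, \<alpha>) \<in> k0 \<and> \<beta> \<noteq> \<alpha> \<and> P i \<beta>} = {}" for X P
    using wo_rel.ANTISYM[OF wo] by (auto dest: antisymD)
  have "(\<alpha>, \<alpha>) \<in> k0"
    using wo_rel.REFL[OF wo] Kp(3) by (auto dest: refl_onD)
  moreover have "i \<in> w \<Longrightarrow> (r i \<beta> \<or> r' i \<beta>) = r i \<beta>" "i \<in> w' \<Longrightarrow> (r i \<beta> \<or> r' i \<beta>) = r' i \<beta>"
    for i \<beta> using Kp(4) Kq(3) agree_common by blast+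
  ultimately have "Kle k0 p s \<and> Kle k0 q s"
    using Cinfinite_gt_empty[OF k0] unfolding pq s_def Kle_def by (simp add: no_new same_height)
  with s show ?thesis by blast
qed

lemma card_of_Kset_traces_le:
  assumes k0: "Cinfinite k0" and N: "|N| \<le>o |Pow (Field k0)|"
  shows "|{(t, Krestrict q t) |q t. q \<in> Kset k0 k1 \<and> t \<subseteq> fst q \<and> t \<subseteq> N}| \<le>o |Pow (Field k0)|"
proof -
  let ?D = "Field k0"
  let ?small = "\<lambda>X. {Y. Y \<subseteq> X \<and> |Y| \<le>o |?D|}"
  have D: "\<not> finite ?D" using k0 by (simp add: cinfinite_def)
  have PowD: "\<not> finite (Field |Pow ?D| )" "Card_order |Pow ?D|"
    using D by (simp_all add: Field_card_of card_of_card_order_on)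
  have D_le: "|?D| \<le>o |Pow ?D|" by (rule ordLess_imp_ordLeq[OF card_of_Pow])
  have "{(t, Krestrict q t) |q t. q \<in> Kset k0 k1 \<and> t \<subseteq> fst q \<and> t \<subseteq> N}
      \<subseteq> ?small N \<times> (?D \<times> ?small (N \<times> ?D))" (is "?traces \<subseteq> ?box")
  proof
    fix x assume "x \<in> ?traces"
    then obtain w \<alpha> r t where x: "x = (t, Krestrict (w, \<alpha>, r) t)"
      and q: "(w, \<alpha>, r) \<in> Kset k0 k1" and t: "t \<subseteq> w" "t \<subseteq> N"
      by auto
    have r: "\<alpha> \<in> ?D" "\<And>i \<beta>. r i \<beta> \<Longrightarrow> \<beta> \<in> ?D"
      using q unfolding Kset_def by (auto intro: FieldI1)
    have "|t| \<le>o |w|" using t(1) by (simp add: card_of_mono1)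
    also have "|w| =o |?D|"
      using q ordIso_symmetric[OF card_of_Field_ordIso] k0 unfolding Kset_def
      by (blast intro: ordIso_transitive)
    finally have t_small: "|t| \<le>o |?D|" .
    have "{(i, \<beta>). i \<in> t \<and> r i \<beta>} \<subseteq> t \<times> ?D" using r(2) by auto
    moreover have "|t \<times> ?D| \<le>o |?D|"
      using card_of_Times_ordLeq_infinite_Field[of "|?D|", unfolded Field_card_of] D t_small
        ordLeq_refl[OF card_of_Card_order[of ?D]]
      by (simp add: card_of_card_order_on)
    ultimately have "|{(i, \<beta>). i \<in> t \<and> r i \<beta>}| \<le>o |?D|"
      by (blast intro: ordLeq_transitive card_of_mono1)
    then show "x \<in> ?box"
      using x t t_small r unfolding Krestrict_def by auto
  qed
  moreover have "|?box| \<le>o |Pow ?D|"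
  proof -
    have "|N \<times> ?D| \<le>o |Pow ?D|"
      by (rule card_of_Times_ordLeq_infinite_Field[OF PowD(1) N D_le PowD(2)])
    then show ?thesis
      using card_of_bounded_subsets_le_Pow[OF N D] card_of_bounded_subsets_le_Pow[OF _ D] D_le
      by (blast intro: card_of_Times_ordLeq_infinite_Field[OF PowD(1) _ _ PowD(2)])
  qed
  ultimately show ?thesis by (rule ordLeq_transitive[OF card_of_mono1])
qed

lemma card_of_Kset_supported_le:
  assumes k0: "Cinfinite k0" and N: "|N| \<le>o |Pow (Field k0)|"
  shows "|{q \<in> Kset k0 k1. fst q \<subseteq> N}| \<le>o |Pow (Field k0)|"
proof -
  let ?trace = "\<lambda>q. (fst q, Krestrict q (fst q))"
  have "inj_on ?trace (Kset k0 k1)"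
    by (rule inj_onI) (auto simp: Kset_def Krestrict_def set_eq_iff fun_eq_iff; blast)
  moreover have "?trace ` {q \<in> Kset k0 k1. fst q \<subseteq> N}
      \<subseteq> {(t, Krestrict q t) |q t. q \<in> Kset k0 k1 \<and> t \<subseteq> fst q \<and> t \<subseteq> N}"
    by blast
  ultimately show ?thesis
    by (blast intro: ordLeq_transitive[OF _ card_of_Kset_traces_le[OF k0 N]] card_of_ordLeq[THEN iffD1]
        inj_on_subset)
qed

lemma trace_reflection_Kset:
  assumes k0: "Cinfinite k0" and A: "A \<subseteq> Kset k0 k1"
  shows "trace_reflection A fst Krestrict k0 |Pow (Field k0)|"
proof
  show "cardSuc k0 \<le>o |Pow (Field k0)|"
    using k0 by (simp add: cardSuc_least card_of_Card_order Card_order_Pow)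
  show "|fst q| \<le>o k0" if "q \<in> A" for q
    using that A by (auto simp: Kset_def ordIso_imp_ordLeq)
  show "|{(t, Krestrict q t) |q t. q \<in> A \<and> t \<subseteq> fst q \<and> t \<subseteq> N}| \<le>o |Pow (Field k0)|"
    if "|N| \<le>o |Pow (Field k0)|" for N
    using A by (blast intro: ordLeq_transitive[OF card_of_mono1 card_of_Kset_traces_le[OF k0 that]])
qed (simp_all add: k0 card_of_Card_order)

lemma card_of_Kset_antichain_le:
  assumes k0: "Cinfinite k0" and A: "A \<subseteq> Kset k0 k1"
    and antichain: "\<forall>p\<in>A. \<forall>q\<in>A. p \<noteq> q \<longrightarrow> \<not> (\<exists>s\<in>Kset k0 k1. Kle k0 p s \<and> Kle k0 q s)"
  shows "|A| \<le>o |Pow (Field k0)|"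
proof -
  interpret trace_reflection A fst Krestrict k0 "|Pow (Field k0)|"
    using trace_reflection_Kset[OF k0 A] .
  obtain M where M: "|M| \<le>o |Pow (Field k0)|"
    and reflects: "\<forall>q\<in>A. \<exists>p\<in>A. fst p \<subseteq> M \<and> Krestrict p (fst q \<inter> M) = Krestrict q (fst q \<inter> M)"
    using reflecting_set_exists by blast
  have "fst q \<subseteq> M" if q: "q \<in> A" for q
  proof -
    obtain p where p: "p \<in> A" "fst p \<subseteq> M" "Krestrict p (fst q \<inter> M) = Krestrict q (fst q \<inter> M)"
      using reflects q by blast
    then have "\<exists>s\<in>Kset k0 k1. Kle k0 p s \<and> Kle k0 q s"
      using Kset_compatible[OF k0] A q by blast
    then show ?thesis using antichain p q by metis
  qed
  then have "A \<subseteq> {q \<in> Kset k0 k1. fst q \<subseteq> M}" using A by blast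
  then show ?thesis
    by (rule ordLeq_transitive[OF card_of_mono1 card_of_Kset_supported_le[OF k0 M]])
qed

theorem lemma5:
  fixes del :: "'a rel" and lam :: "'b rel"
  assumes "Card_order del" "Cinfinite del" "regularCard del"
    and "Card_order lam" "Cinfinite lam" "regularCard lam"
    and "del <o lam"
    and "cardSuc del <o lam"
    and "inaccessible del"
    and "inaccessible lam \<or>
         (\<exists>mu :: 'b rel. Card_order mu \<and> Cinfinite mu \<and> cof_gt mu del \<and> lam =o cardSuc mu)"
    and "|Pow (Field del)| =o cardSuc del"
  shows "chain_condition (Kset del lam) (Kle del) (cardSuc (cardSuc del))"
  unfolding chain_condition_def
proof (intro allI impI, elim conjE)
  fix A assume "A \<subseteq> Kset del lam"
    and "\<forall>p\<in>A. \<forall>q\<in>A. p \<noteq> q \<longrightarrow> \<not> (\<exists>s\<in>Kset del lam. Kle del p s \<and> Kle del q s)"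
  then have "|A| \<le>o |Pow (Field del)|" by (rule card_of_Kset_antichain_le[OF assms(2)])
  also have "|Pow (Field del)| <o cardSuc (cardSuc del)"
    using assms(11) cardSuc_greater[OF cardSuc_Card_order[OF assms(1)]] by (rule ordIso_ordLess_trans)
  finally show "|A| <o cardSuc (cardSuc del)" .
qed

end
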